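(* Let $\Pi$ be an $\mathrm{LP}^{\mathrm{MLN}}$ program such that $\mathrm{SM}'[\Pi]$ is not empty. Then for every interpretation $I$, $P'_\Pi(I) = P_\Pi(I)$.
   Context: Fix a first-order signature $\sigma$ with no function constants of positive arity; Herbrand interpretations are identified with sets of ground atoms. A formula is negative if every occurrence of every atom is in the scope of negation. A rule has the form $A\leftarrow B\wedge N$ ($A$ a possibly empty disjunction of atoms, $B$ a conjunction of atoms, $N$ a negative formula), identified with $B\wedge N\rightarrow A$. For a ground program (finite set of rules) $\Pi$, the reduct $\Pi^I$ consists of $A\leftarrow B$ for all rules $A\leftarrow B\wedge N$ in $\Pi$ with $I\models N$; $I$ is a (deterministic) stable model of $\Pi$ if $I$ is a minimal Herbrand model of $\Pi^I$. An $\mathrm{LP}^{\mathrm{MLN}}$ program $\Pi$ is a finite set of weighted rules $w:R$, where $R$ is a rule and $w$ is a real number (soft rule) or the symbol $\alpha$ (hard rule); it is identified with its ground instance, each ground rule inheriting the weight of the rule it comes from. $\overline{\Pi}=\{R \mid w:R\in\Pi\}$; $\Pi_I$ is the set of $w:R\in\Pi$ with $I\models R$; $\Pi^{\rm hard}$ and $\Pi^{\rm soft}$ are the sets of hard and soft rules. $\mathrm{SM}[\Pi]=\{I\mid I \text{ is a stable model of } \overline{\Pi_I}\}$. With $\alpha$ treated as a real parameter, $W_\Pi(I)=\exp(\sum_{w:R\in\Pi_I} w)$ if $I\in\mathrm{SM}[\Pi]$ and $0$ otherwise, and $P_\Pi(I)=\lim_{\alpha\to\infty} W_\Pi(I)/\sum_{J\in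 \mathrm{SM}[\Pi]}W_\Pi(J)$. Further, $\mathrm{SM}'[\Pi]$ is the set of interpretations $I$ that are stable models of $\overline{\Pi_I}$ and satisfy $\overline{\Pi^{\rm hard}}$; $W'_\Pi(I)=\exp(\sum_{w:R\in(\Pi^{\rm soft})_I} w)$ if $I\in \mathrm{SM}'[\Pi]$ and $0$ otherwise; $P'_\Pi(I)=W'_\Pi(I)/\sum_{J\in\mathrm{SM}'[\Pi]}W'_\Pi(J)$. *)

theory Defs
  imports Complex_Main
begin

datatype 'a formula =
    FTop | FBot | FAtom 'a | FNeg "'a formula"
  | FConj "'a formula" "'a formula" | FDisj "'a formula" "'a formula"
  | FImp "'a formula" "'a formula"

fun fsat :: "'a set \<Rightarrow> 'a formula \<Rightarrow> bool" where
  "fsat I FTop = True"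
| "fsat I FBot = False"
| "fsat I (FAtom a) = (a \<in> I)"
| "fsat I (FNeg f) = (\<not> fsat I f)"
| "fsat I (FConj f g) = (fsat I f \<and> fsat I g)"
| "fsat I (FDisj f g) = (fsat I f \<or> fsat I g)"
| "fsat I (FImp f g) = (fsat I f \<longrightarrow> fsat I g)"

fun negative :: "'a formula \<Rightarrow> bool" where
  "negative FTop = True"
| "negative FBot = True"
| "negative (FAtom a) = False"
| "negative (FNeg f) = True"
| "negative (FConj f g) = (negative f \<and> negative g)"
| "negative (FDisj f g) = (negative f \<and> negative g)"
| "negative (FImp f g) = (negative f \<and> negative g)"

text \<open>A ground rule  A \<leftarrow> B \<and> N : head = disjunction of atoms (possibly empty),
  body = conjunction of atoms, nbody = negative formula.\<close>
record 'a rule =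
  head :: "'a list"
  body :: "'a list"
  nbody :: "'a formula"

definition rule_sat :: "'a set \<Rightarrow> 'a rule \<Rightarrow> bool" where
  "rule_sat I r \<longleftrightarrow> (set (body r) \<subseteq> I \<and> fsat I (nbody r) \<longrightarrow> set (head r) \<inter> I \<noteq> {})"

definition reduct :: "'a rule set \<Rightarrow> 'a set \<Rightarrow> ('a list \<times> 'a list) set" where
  "reduct P I = {(head r, body r) | r. r \<in> P \<and> fsat I (nbody r)}"

definition pos_model :: "'a set \<Rightarrow> ('a list \<times> 'a list) set \<Rightarrow> bool" where
  "pos_model I Q \<longleftrightarrow> (\<forall>(A, B) \<in> Q. set B \<subseteq> I \<longrightarrow> set A \<inter> I \<noteq> {})"

definition minimal_model :: "'a set \<Rightarrow> ('a list \<times> 'a list) set \<Rightarrow> bool" where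
  "minimal_model I Q \<longleftrightarrow> pos_model I Q \<and> (\<forall>J. J \<subset> I \<longrightarrow> \<not> pos_model J Q)"

definition stable_model :: "'a set \<Rightarrow> 'a rule set \<Rightarrow> bool" where
  "stable_model I P \<longleftrightarrow> minimal_model I (reduct P I)"

datatype weight = Soft real | Hard

type_synonym 'a lpmln = "(weight \<times> 'a rule) set"

definition rules_of :: "'a lpmln \<Rightarrow> 'a rule set" where
  "rules_of \<Pi> = snd ` \<Pi>"

definition sat_part :: "'a lpmln \<Rightarrow> 'a set \<Rightarrow> 'a lpmln" where
  "sat_part \<Pi> I = {wr \<in> \<Pi>. rule_sat I (snd wr)}"

definition hard_part :: "'a lpmln \<Rightarrow> 'a lpmln" where
  "hard_part \<Pi> = {wr \<in> \<Pi>. fst wr = Hard}"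

definition soft_part :: "'a lpmln \<Rightarrow> 'a lpmln" where
  "soft_part \<Pi> = {wr \<in> \<Pi>. fst wr \<noteq> Hard}"

text \<open>Value of a weight with alpha treated as the real parameter al.\<close>
fun wval :: "real \<Rightarrow> weight \<Rightarrow> real" where
  "wval al (Soft w) = w"
| "wval al Hard = al"

definition SM :: "'a lpmln \<Rightarrow> 'a set set" where
  "SM \<Pi> = {I. stable_model I (rules_of (sat_part \<Pi> I))}"

definition W :: "real \<Rightarrow> 'a lpmln \<Rightarrow> 'a set \<Rightarrow> real" where
  "W al \<Pi> I = (if I \<in> SM \<Pi> then exp (\<Sum>wr\<in>sat_part \<Pi> I. wval al (fst wr)) else 0)"

definition P :: "'a lpmln \<Rightarrow> 'a set \<Rightarrow> real" where
  "P \<Pi> I = Lim at_top (\<lambda>al. W al \<Pi> I / (\<Sum>J\<in>SM \<Pi>. W al \<Pi> J))"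

definition SM' :: "'a lpmln \<Rightarrow> 'a set set" where
  "SM' \<Pi> = {I. stable_model I (rules_of (sat_part \<Pi> I))
               \<and> (\<forall>r \<in> rules_of (hard_part \<Pi>). rule_sat I r)}"

definition W' :: "'a lpmln \<Rightarrow> 'a set \<Rightarrow> real" where
  "W' \<Pi> I = (if I \<in> SM' \<Pi> then exp (\<Sum>wr\<in>sat_part (soft_part \<Pi>) I. wval 0 (fst wr)) else 0)"

definition P' :: "'a lpmln \<Rightarrow> 'a set \<Rightarrow> real" where
  "P' \<Pi> I = W' \<Pi> I / (\<Sum>J\<in>SM' \<Pi>. W' \<Pi> J)"

definition lpmln_program :: "'a lpmln \<Rightarrow> bool" where
  "lpmln_program \<Pi> \<longleftrightarrow> finite \<Pi> \<and> (\<forall>wr \<in> \<Pi>. negative (nbody (snd wr)))"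

end

theory Submission
  imports Defs
begin

text \<open>
  The weight of a stable model J of the whole program is exp (s J + \<alpha> * k J), where
  s J is the total weight of the soft rules J satisfies and k J the number of hard rules
  it satisfies. After dividing numerator and denominator of P by exp (\<alpha> * m), with m
  the number of hard rules, every term with k J < m vanishes as \<alpha> tends to infinity;
  the survivors are the stable models satisfying all hard rules, i.e. SM', with weights
  exp (s J) = W' J. The sums are finite because a stable model consists of head atoms.
\<close>

lemma stable_model_subset_heads:
  assumes "stable_model I Q"
  shows "I \<subseteq> (\<Union>r\<in>Q. set (head r))"
proof (rule ccontr)
  let ?H = "\<Union>r\<in>Q. set (head r)"
  let ?R = "reduct Q I"
  assume "\<not> I \<subseteq> ?H"
  then have smaller: "I \<inter> ?H \<subset> I" by blast
  from assms have model: "pos_model I ?R" and minimal: "\<forall>J. J \<subset> I \<longrightarrow> \<not> pos_model J ?R"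
    unfolding stable_model_def minimal_model_def by auto
  have "set A \<subseteq> ?H" if "(A, B) \<in> ?R" for A B
    using that unfolding reduct_def by auto
  with model have "pos_model (I \<inter> ?H) ?R"
    unfolding pos_model_def by fast
  with minimal smaller show False by blast
qed

lemma finite_SM:
  assumes "finite \<Pi>"
  shows "finite (SM \<Pi>)"
proof -
  let ?H = "\<Union>r\<in>rules_of \<Pi>. set (head r)"
  have "I \<subseteq> ?H" if "I \<in> SM \<Pi>" for I
  proof -
    have "I \<subseteq> (\<Union>r\<in>rules_of (sat_part \<Pi> I). set (head r))"
      using that unfolding SM_def by (simp add: stable_model_subset_heads)
    also have "\<dots> \<subseteq> ?H"
      unfolding rules_of_def sat_part_def by (intro UN_mono) auto
    finally show ?thesis .
  qed
  then have "SM \<Pi> \<subseteq> Pow ?H"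
    by blast
  moreover have "finite ?H"
    using assms unfolding rules_of_def by simp
  ultimately show ?thesis
    using finite_subset by blast
qed

lemma sat_part_subset: "sat_part \<Pi> J \<subseteq> \<Pi>"
  unfolding sat_part_def by auto

lemma all_rules_sat_iff_card_sat_part:
  assumes "finite \<Pi>"
  shows "(\<forall>r \<in> rules_of \<Pi>. rule_sat J r) \<longleftrightarrow> card (sat_part \<Pi> J) = card \<Pi>"
proof -
  have "(\<forall>r \<in> rules_of \<Pi>. rule_sat J r) \<longleftrightarrow> sat_part \<Pi> J = \<Pi>"
    unfolding rules_of_def sat_part_def by auto
  also have "\<dots> \<longleftrightarrow> card (sat_part \<Pi> J) = card \<Pi>"
    using assms sat_part_subset card_subset_eq by metis
  finally show ?thesis .
qed

lemma SM'_eq_SM_all_hard_sat: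
  assumes "finite \<Pi>"
  shows "SM' \<Pi> = {J \<in> SM \<Pi>. card (sat_part (hard_part \<Pi>) J) = card (hard_part \<Pi>)}"
proof -
  have "finite (hard_part \<Pi>)"
    using assms unfolding hard_part_def by auto
  then show ?thesis
    unfolding SM'_def SM_def using all_rules_sat_iff_card_sat_part by blast
qed

lemma sum_wval_sat_part:
  assumes "finite \<Pi>"
  shows "(\<Sum>wr\<in>sat_part \<Pi> J. wval al (fst wr))
       = (\<Sum>wr\<in>sat_part (soft_part \<Pi>) J. wval 0 (fst wr))
         + al * card (sat_part (hard_part \<Pi>) J)"
proof -
  let ?S = "sat_part (soft_part \<Pi>) J" and ?H = "sat_part (hard_part \<Pi>) J"
  have split: "sat_part \<Pi> J = ?S \<union> ?H" and disjoint: "?S \<inter> ?H = {}"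
    unfolding sat_part_def soft_part_def hard_part_def by auto
  have finite: "finite ?S" "finite ?H"
    using assms unfolding sat_part_def soft_part_def hard_part_def by auto
  have "(\<Sum>wr\<in>?S. wval al (fst wr)) = (\<Sum>wr\<in>?S. wval 0 (fst wr))"
  proof (rule sum.cong)
    fix wr assume "wr \<in> ?S"
    then show "wval al (fst wr) = wval 0 (fst wr)"
      unfolding sat_part_def soft_part_def by (cases "fst wr") auto
  qed simp
  moreover have "(\<Sum>wr\<in>?H. wval al (fst wr)) = (\<Sum>wr\<in>?H. al)"
    by (rule sum.cong) (auto simp: sat_part_def hard_part_def)
  ultimately show ?thesis
    unfolding split sum.union_disjoint[OF finite disjoint] by simp
qed

lemma tendsto_exp_affine_neg_at_top:
  fixes a d :: real
  assumes "d < 0"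
  shows "((\<lambda>x. exp (a + x * d)) \<longlongrightarrow> 0) at_top"
proof -
  have "filterlim (\<lambda>x. d * x) at_bot at_top"
    using assms by (intro filterlim_tendsto_neg_mult_at_bot[OF tendsto_const] filterlim_ident)
  then have "filterlim (\<lambda>x. a + x * d) at_bot at_top"
    by (simp add: filterlim_tendsto_add_at_bot_iff[OF tendsto_const] mult.commute)
  then show ?thesis
    by (rule filterlim_compose[OF exp_at_bot])
qed

lemma tendsto_exp_weight_ratio_argmax:
  fixes s k :: "'b \<Rightarrow> real"
  assumes "finite S" and "\<And>J. J \<in> S \<Longrightarrow> k J \<le> c"
    and T_def: "T = {J \<in> S. k J = c}" and "T \<noteq> {}"
  shows "((\<lambda>al. (if I \<in> S then exp (s I + al * k I) else 0) / (\<Sum>J\<in>S. exp (s J + al * k J)))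
           \<longlongrightarrow> (if I \<in> T then exp (s I) else 0) / (\<Sum>J\<in>T. exp (s J))) at_top"
proof -
  define f where "f al J = exp (s J + al * (k J - c))" for al J
  define g where "g J = (if J \<in> T then exp (s J) else 0)" for J
  have f_tendsto: "((\<lambda>al. f al J) \<longlongrightarrow> g J) at_top" if "J \<in> S" for J
  proof (cases "J \<in> T")
    case True
    then show ?thesis unfolding f_def g_def T_def by simp
  next
    case False
    with that assms(2) have "k J - c < 0" unfolding T_def by force
    then show ?thesis unfolding f_def g_def using False tendsto_exp_affine_neg_at_top by simp
  qed
  have "(\<Sum>J\<in>S. g J) = (\<Sum>J\<in>T. exp (s J))"
    using sum.mono_neutral_right[OF \<open>finite S\<close>, of T g] unfolding T_def g_def by auto
  then have denom: "((\<lambda>al. \<Sum>J\<in>S. f al J) \<longlongrightarrow> (\<Sum>J\<in>T. exp (s J))) at_top"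
    using tendsto_sum[of S "\<lambda>J al. f al J" g] f_tendsto by simp
  have numer: "((\<lambda>al. if I \<in> S then f al I else 0) \<longlongrightarrow> g I) at_top"
    using f_tendsto by (cases "I \<in> S") (auto simp: g_def T_def)
  have "(\<Sum>J\<in>T. exp (s J)) > 0"
    using assms(1,4) unfolding T_def by (intro sum_pos) auto
  with tendsto_divide[OF numer denom]
  have "((\<lambda>al. (if I \<in> S then f al I else 0) / (\<Sum>J\<in>S. f al J)) \<longlongrightarrow> g I / (\<Sum>J\<in>T. exp (s J))) at_top"
    by simp
  moreover have "exp (s J + al * k J) = exp (al * c) * f al J" for al J
    unfolding f_def by (simp add: exp_add[symmetric] algebra_simps)
  then have "(if I \<in> S then exp (s I + al * k I) else 0) / (\<Sum>J\<in>S. exp (s J + al * k J))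
           = (if I \<in> S then f al I else 0) / (\<Sum>J\<in>S. f al J)" for al
    by (simp add: sum_distrib_left[symmetric])
  ultimately show ?thesis
    unfolding g_def by simp
qed

theorem proposition2:
  fixes \<Pi> :: "'a lpmln" and I :: "'a set"
  assumes "lpmln_program \<Pi>"
    and "SM' \<Pi> \<noteq> {}"
  shows "P' \<Pi> I = P \<Pi> I"
proof -
  have fin: "finite \<Pi>" using assms(1) unfolding lpmln_program_def by auto
  define s where "s J = (\<Sum>wr\<in>sat_part (soft_part \<Pi>) J. wval 0 (fst wr))" for J
  define k where "k J = real (card (sat_part (hard_part \<Pi>) J))" for J
  define m where "m = real (card (hard_part \<Pi>))"
  have W: "W al \<Pi> J = (if J \<in> SM \<Pi> then exp (s J + al * k J) else 0)" for al J
    unfolding W_def s_def k_def sum_wval_sat_part[OF fin] ..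
  have W': "W' \<Pi> J = (if J \<in> SM' \<Pi> then exp (s J) else 0)" for J
    unfolding W'_def s_def ..
  have SM': "SM' \<Pi> = {J \<in> SM \<Pi>. k J = m}"
    unfolding SM'_eq_SM_all_hard_sat[OF fin] k_def m_def by simp
  have "k J \<le> m" for J
    unfolding k_def m_def using fin
    by (simp add: card_mono hard_part_def sat_part_subset)
  with tendsto_exp_weight_ratio_argmax[OF finite_SM[OF fin] _ SM' assms(2), of I s]
  have "((\<lambda>al. W al \<Pi> I / (\<Sum>J\<in>SM \<Pi>. W al \<Pi> J)) \<longlongrightarrow> P' \<Pi> I) at_top"
    unfolding W P'_def W' by simp
  then show ?thesis
    unfolding P_def by (rule tendsto_Lim[OF trivial_limit_at_top_linorder, symmetric])
qed

end
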